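(* Let $\mathbf{H}$ be a real symmetric $d\times d$ matrix and let $\mathbf{H}(\omega)$ be random symmetric matrices with $\mathbb{E}\,\mathbf{H}(\omega)=\mathbf{H}$, $\mathbb{E}\|\mathbf{H}(\omega)\|_2^2\le\sigma^2$ and $\|\mathbf{H}(\omega)\|_2\le G_1$. Let $\alpha(n)>0$ with $\sum_n\alpha(n)=\infty$, $\sum_n\alpha(n)^2<\infty$. Starting from a unit vector $\mathbf{v}(0)$, define $$\hat{\mathbf{v}}(n+1)=\mathbf{v}(n)-\alpha(n)(I-\mathbf{v}(n)\mathbf{v}(n)^\top)\mathbf{H}(\omega(n))\mathbf{v}(n),\qquad \mathbf{v}(n+1)=\hat{\mathbf{v}}(n+1)/\|\hat{\mathbf{v}}(n+1)\|_2,$$ with $\omega(n)$ independent fresh samples. Then, almost surely, the limit points of $(\mathbf{v}(n))$ lie in the eigenspaces of $\mathbf{H}$, i.e. they are eigenvectors of $\mathbf{H}$. *)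

theory Defs
  imports "HOL-Analysis.Analysis" "HOL-Probability.Probability"
begin

definition opnorm2 :: "real^'n^'m \<Rightarrow> real" where
  "opnorm2 A = onorm (\<lambda>x. A *v x)"

definition outer :: "real^'n \<Rightarrow> real^'m \<Rightarrow> real^'m^'n" where
  "outer u v = (\<chi> i j. u $ i * v $ j)"

fun oja_iter :: "(nat \<Rightarrow> real) \<Rightarrow> (nat \<Rightarrow> real^'d^'d) \<Rightarrow> real^'d \<Rightarrow> nat \<Rightarrow> real^'d" where
  "oja_iter a Hs v0 0 = v0"
| "oja_iter a Hs v0 (Suc n) =
     (let v = oja_iter a Hs v0 n;
          w = v - a n *s ((mat 1 - outer v v) *v (Hs n *v v))
      in (1 / norm w) *s w)"

end

theory Submission
  imports Defs
begin

(* Oja's iteration is a stochastic approximation of the gradient flow of the Rayleigh quotient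
   on the unit sphere, driven by the projected gradient g(u) = Hbar u - <u, Hbar u> u, whose zeros
   are exactly the unit eigenvectors of Hbar.  Renormalisation costs only O(alpha(n)^2).  The noise
   alpha(n) (H(omega(n)) - Hbar) enters through bounded predictable coefficients, so its weighted
   partial sums are L^2-bounded martingales and converge almost surely.  On such a sample path the
   Rayleigh quotient is bounded and decreases by 2 alpha(n) |g(v(n))|^2 up to summable terms, so
   sum alpha(n) |g(v(n))|^2 < infinity; with sum alpha(n) = infinity and the uniform continuity of g
   on the sphere this forces g(v(n)) -> 0, and every limit point of v(n) is an eigenvector. *)

section \<open>Convergence of martingales with predictable bounded weights\<close>

lemma power2_le_if_abs_le: "\<bar>x\<bar> \<le> (y::real) \<Longrightarrow> x\<^sup>2 \<le> y\<^sup>2"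
  by (metis abs_ge_zero order_trans power2_le_iff_abs_le)

lemma sum_until_first_failure:
  fixes c :: "nat \<Rightarrow> real"
  assumes "m \<le> k0" "k0 \<le> N" "\<not> Q k0" "\<And>j. m \<le> j \<Longrightarrow> j < k0 \<Longrightarrow> Q j"
  shows "(\<Sum>k<N. of_bool (m \<le> k \<and> (\<forall>j\<in>{m..k}. Q j)) * c k) = (\<Sum>k\<in>{m..<k0}. c k)"
proof -
  have "{..<N} \<inter> {k. m \<le> k \<and> (\<forall>j\<in>{m..k}. Q j)} = {m..<k0}"
    using assms by (auto simp: not_less)
  then show ?thesis by simp
qed

lemma prod_of_bool: "finite S \<Longrightarrow> (\<Prod>j\<in>S. of_bool (Q j) :: real) = of_bool (\<forall>j\<in>S. Q j)"
  by (induction S rule: finite_induct) auto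

locale bounded_centered_iid = prob_space M for M :: "'a measure" +
  fixes P :: "'w measure" and W :: "nat \<Rightarrow> 'a \<Rightarrow> 'w" and e :: "'w \<Rightarrow> real" and B :: real
  assumes measurable_W: "\<And>n. W n \<in> measurable M P"
    and indep_W: "indep_vars (\<lambda>_. P) W UNIV"
    and distr_W: "\<And>n. distr M P (W n) = P"
    and measurable_e: "e \<in> borel_measurable P"
    and bounded_e: "\<And>w. w \<in> space P \<Longrightarrow> \<bar>e w\<bar> \<le> B"
    and centered_e: "integral\<^sup>L P e = 0"
begin

text \<open>Measurability with respect to \<open>\<sigma>(W 0, \<dots>, W (n - 1))\<close>, stated through an explicit
  factorisation so that the independence of \<open>W n\<close> from the past applies directly.\<close>
definition past_measurable :: "nat \<Rightarrow> ('a \<Rightarrow> real) \<Rightarrow> bool" where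
  "past_measurable n Y \<longleftrightarrow>
     (\<exists>F \<in> borel_measurable (PiM {..<n} (\<lambda>_. P)). \<forall>x\<in>space M. Y x = F (\<lambda>i\<in>{..<n}. W i x))"

lemma past_measurableI:
  "F \<in> borel_measurable (PiM {..<n} (\<lambda>_. P)) \<Longrightarrow> (\<And>x. x \<in> space M \<Longrightarrow> Y x = F (\<lambda>i\<in>{..<n}. W i x))
   \<Longrightarrow> past_measurable n Y"
  unfolding past_measurable_def by blast

lemma past_measurableE:
  assumes "past_measurable n Y"
  obtains G where "G \<in> borel_measurable (PiM {..<n} (\<lambda>_. P))"
    and "\<And>x. x \<in> space M \<Longrightarrow> Y x = G (\<lambda>i\<in>{..<n}. W i x)"
  using assms unfolding past_measurable_def by blast

lemma measurable_restrict_W: "(\<lambda>x. \<lambda>i\<in>I. W i x) \<in> measurable M (PiM I (\<lambda>_. P))"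
  by (rule measurable_restrict) (use measurable_W in auto)

lemma borel_measurable_past:
  assumes "past_measurable n Y" shows "Y \<in> borel_measurable M"
proof -
  obtain F where F: "F \<in> borel_measurable (PiM {..<n} (\<lambda>_. P))"
    and Y: "\<And>x. x \<in> space M \<Longrightarrow> Y x = F (\<lambda>i\<in>{..<n}. W i x)"
    using past_measurableE[OF assms] by metis
  have "(\<lambda>x. F (\<lambda>i\<in>{..<n}. W i x)) \<in> borel_measurable M"
    using measurable_restrict_W F by (rule measurable_compose)
  then show ?thesis using Y by (subst measurable_cong) auto
qed

lemma past_measurable_mono:
  assumes "past_measurable m Y" "m \<le> n" shows "past_measurable n Y"
proof -
  obtain F where F: "F \<in> borel_measurable (PiM {..<m} (\<lambda>_. P))"
    and Y: "\<And>x. x \<in> space M \<Longrightarrow> Y x = F (\<lambda>i\<in>{..<m}. W i x)"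
    using past_measurableE[OF assms(1)] by metis
  show ?thesis
  proof (rule past_measurableI)
    show "(\<lambda>f. F (restrict f {..<m})) \<in> borel_measurable (PiM {..<n} (\<lambda>_. P))"
      using assms(2) by (intro measurable_compose[OF measurable_restrict_subset F]) auto
    show "Y x = F (restrict (\<lambda>i\<in>{..<n}. W i x) {..<m})" if "x \<in> space M" for x
      using Y[OF that] assms(2) by (auto simp: restrict_def fun_eq_iff intro!: arg_cong[where f=F])
  qed
qed

lemma past_measurable_const: "past_measurable n (\<lambda>_. c)"
  by (rule past_measurableI[of "\<lambda>_. c"]) auto

lemma past_measurable_sample:
  assumes "k < n" "g \<in> borel_measurable P" shows "past_measurable n (\<lambda>x. g (W k x))"
proof (rule past_measurableI)
  show "(\<lambda>f. g (f k)) \<in> borel_measurable (PiM {..<n} (\<lambda>_. P))"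
    using assms by (intro measurable_compose[OF measurable_component_singleton[of k] assms(2)]) auto
qed (use assms in auto)

lemma past_measurable_compose:
  assumes "past_measurable n Y" "\<phi> \<in> borel_measurable borel"
  shows "past_measurable n (\<lambda>x. \<phi> (Y x))"
proof -
  obtain F where "F \<in> borel_measurable (PiM {..<n} (\<lambda>_. P))"
    and "\<And>x. x \<in> space M \<Longrightarrow> Y x = F (\<lambda>i\<in>{..<n}. W i x)"
    using past_measurableE[OF assms(1)] by metis
  with assms(2) show ?thesis by (intro past_measurableI[of "\<lambda>f. \<phi> (F f)"]) auto
qed

lemma past_measurable_compose2:
  assumes "past_measurable n Y" "past_measurable n Z" "\<phi> \<in> borel_measurable (borel \<Otimes>\<^sub>M borel)"
  shows "past_measurable n (\<lambda>x. \<phi> (Y x, Z x))"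
proof -
  obtain F where F: "F \<in> borel_measurable (PiM {..<n} (\<lambda>_. P))"
    and Y: "\<And>x. x \<in> space M \<Longrightarrow> Y x = F (\<lambda>i\<in>{..<n}. W i x)"
    using past_measurableE[OF assms(1)] by metis
  obtain G where G: "G \<in> borel_measurable (PiM {..<n} (\<lambda>_. P))"
    and Z: "\<And>x. x \<in> space M \<Longrightarrow> Z x = G (\<lambda>i\<in>{..<n}. W i x)"
    using past_measurableE[OF assms(2)] by metis
  show ?thesis
    by (rule past_measurableI[of "\<lambda>f. \<phi> (F f, G f)"])
       (use measurable_compose[OF measurable_Pair[OF F G] assms(3)] Y Z in auto)
qed

lemma past_measurable_mult: "past_measurable n Y \<Longrightarrow> past_measurable n Z \<Longrightarrow> past_measurable n (\<lambda>x. Y x * Z x)"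
  using past_measurable_compose2[of n Y Z "\<lambda>p. fst p * snd p"]
  by (simp add: borel_prod borel_measurable_continuous_onI continuous_intros)

lemma past_measurable_add: "past_measurable n Y \<Longrightarrow> past_measurable n Z \<Longrightarrow> past_measurable n (\<lambda>x. Y x + Z x)"
  using past_measurable_compose2[of n Y Z "\<lambda>p. fst p + snd p"]
  by (simp add: borel_prod borel_measurable_continuous_onI continuous_intros)

lemma past_measurable_diff: "past_measurable n Y \<Longrightarrow> past_measurable n Z \<Longrightarrow> past_measurable n (\<lambda>x. Y x - Z x)"
  using past_measurable_compose2[of n Y Z "\<lambda>p. fst p - snd p"]
  by (simp add: borel_prod borel_measurable_continuous_onI continuous_intros)

lemma past_measurable_sum:
  "finite S \<Longrightarrow> (\<And>k. k \<in> S \<Longrightarrow> past_measurable n (Y k)) \<Longrightarrow> past_measurable n (\<lambda>x. \<Sum>k\<in>S. Y k x)"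
  by (induction S rule: finite_induct) (auto intro: past_measurable_const past_measurable_add)

lemma past_measurable_prod:
  "finite S \<Longrightarrow> (\<And>k. k \<in> S \<Longrightarrow> past_measurable n (Y k)) \<Longrightarrow> past_measurable n (\<lambda>x. \<Prod>k\<in>S. Y k x)"
  by (induction S rule: finite_induct) (auto intro: past_measurable_const past_measurable_mult)

lemma integrable_abs_bounded:
  "f \<in> borel_measurable M \<Longrightarrow> (\<And>x. x \<in> space M \<Longrightarrow> \<bar>f x\<bar> \<le> (K::real)) \<Longrightarrow> integrable M f"
  by (intro integrable_const_bound[where B=K] AE_I2) auto

lemma borel_measurable_noise: "(\<lambda>x. e (W n x)) \<in> borel_measurable M"
  using measurable_W measurable_e by (rule measurable_compose)

lemma bounded_noise: "x \<in> space M \<Longrightarrow> \<bar>e (W n x)\<bar> \<le> B"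
  using bounded_e measurable_space[OF measurable_W] by blast

lemma integral_noise: "integral\<^sup>L M (\<lambda>x. e (W n x)) = 0"
  using integral_distr[OF measurable_W measurable_e, of n] distr_W[of n] centered_e by simp

lemma integral_past_mult_noise:
  assumes "past_measurable n Y" "\<And>x. x \<in> space M \<Longrightarrow> \<bar>Y x\<bar> \<le> K"
  shows "integral\<^sup>L M (\<lambda>x. Y x * e (W n x)) = 0"
proof -
  obtain F where F: "F \<in> borel_measurable (PiM {..<n} (\<lambda>_. P))"
    and Y: "\<And>x. x \<in> space M \<Longrightarrow> Y x = F (\<lambda>i\<in>{..<n}. W i x)"
    using past_measurableE[OF assms(1)] by metis
  have past_indep_present:
    "indep_var (PiM {..<n} (\<lambda>_. P)) (\<lambda>x. \<lambda>i\<in>{..<n}. W i x) (PiM {n} (\<lambda>_. P)) (\<lambda>x. \<lambda>i\<in>{n}. W i x)"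
    by (rule indep_var_restrict[OF indep_W]) auto
  have "(\<lambda>f. e (f n)) \<in> borel_measurable (PiM {n} (\<lambda>_. P))"
    by (rule measurable_compose[OF measurable_component_singleton[of n] measurable_e]) auto
  from indep_var_compose[OF past_indep_present F this]
  have "indep_var borel (\<lambda>x. F (\<lambda>i\<in>{..<n}. W i x)) borel (\<lambda>x. e (W n x))"
    by (simp add: comp_def)
  moreover have "integrable M (\<lambda>x. F (\<lambda>i\<in>{..<n}. W i x))"
    using measurable_compose[OF measurable_restrict_W F] assms(2) Y
    by (intro integrable_abs_bounded[of _ K]) auto
  moreover have "integrable M (\<lambda>x. e (W n x))"
    using borel_measurable_noise bounded_noise by (rule integrable_abs_bounded)
  ultimately have "integral\<^sup>L M (\<lambda>x. F (\<lambda>i\<in>{..<n}. W i x) * e (W n x)) = 0"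
    by (simp add: indep_var_lebesgue_integral integral_noise)
  then show ?thesis
    using Y by (subst Bochner_Integration.integral_cong[OF refl, where g="\<lambda>x. F (\<lambda>i\<in>{..<n}. W i x) * e (W n x)"]) auto
qed

definition noise_sum :: "(nat \<Rightarrow> 'a \<Rightarrow> real) \<Rightarrow> nat \<Rightarrow> 'a \<Rightarrow> real" where
  "noise_sum d N x = (\<Sum>k<N. d k x * e (W k x))"

lemma noise_sum_Suc: "noise_sum d (Suc N) x = noise_sum d N x + d N x * e (W N x)"
  unfolding noise_sum_def by simp

lemma noise_sum_diff: "m \<le> k \<Longrightarrow> noise_sum d k x - noise_sum d m x = (\<Sum>j\<in>{m..<k}. d j x * e (W j x))"
  unfolding noise_sum_def lessThan_atLeast0 by (rule sum_diff_nat_ivl) auto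

lemma past_measurable_noise_sum:
  assumes "\<And>k. past_measurable k (d k)" shows "past_measurable N (noise_sum d N)"
  unfolding noise_sum_def
  by (intro past_measurable_sum past_measurable_mult past_measurable_mono[OF assms]
      past_measurable_sample measurable_e) auto

lemma abs_noise_sum_le:
  assumes "\<And>k x. x \<in> space M \<Longrightarrow> \<bar>d k x\<bar> \<le> D k" "x \<in> space M"
  shows "\<bar>noise_sum d N x\<bar> \<le> B * (\<Sum>k<N. D k)"
proof -
  have "\<bar>noise_sum d N x\<bar> \<le> (\<Sum>k<N. \<bar>d k x\<bar> * \<bar>e (W k x)\<bar>)"
    unfolding noise_sum_def abs_mult[symmetric] by (rule sum_abs)
  also have "\<dots> \<le> (\<Sum>k<N. D k * B)"
    using assms bounded_noise by (intro sum_mono mult_mono) (auto intro: order_trans[OF abs_ge_zero])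
  finally show ?thesis by (simp add: sum_distrib_left mult.commute)
qed

lemma abs_noise_step_le:
  assumes "\<And>k x. x \<in> space M \<Longrightarrow> \<bar>d k x\<bar> \<le> D k" "x \<in> space M"
  shows "\<bar>d N x * e (W N x)\<bar> \<le> D N * B"
  unfolding abs_mult using assms bounded_noise[OF assms(2)]
  by (intro mult_mono) (auto intro: order_trans[OF abs_ge_zero])

lemma integral_noise_sum_Suc_sq:
  assumes past: "\<And>k. past_measurable k (d k)" and bound: "\<And>k x. x \<in> space M \<Longrightarrow> \<bar>d k x\<bar> \<le> D k"
  shows "integral\<^sup>L M (\<lambda>x. (noise_sum d (Suc N) x)\<^sup>2)
    = integral\<^sup>L M (\<lambda>x. (noise_sum d N x)\<^sup>2) + integral\<^sup>L M (\<lambda>x. (d N x * e (W N x))\<^sup>2)"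
proof -
  define S where "S = noise_sum d N"
  have S_past: "past_measurable N S"
    unfolding S_def using past by (rule past_measurable_noise_sum)
  have [measurable]: "S \<in> borel_measurable M" "d N \<in> borel_measurable M"
    using S_past past by (auto intro: borel_measurable_past)
  note [measurable] = borel_measurable_noise
  have S_bound: "\<bar>S x\<bar> \<le> B * (\<Sum>k<N. D k)" if "x \<in> space M" for x
    unfolding S_def using bound that by (rule abs_noise_sum_le)
  have "\<bar>S x * d N x\<bar> \<le> B * (\<Sum>k<N. D k) * D N" if "x \<in> space M" for x
    unfolding abs_mult using S_bound[OF that] bound[OF that]
    by (intro mult_mono) (auto intro: order_trans[OF abs_ge_zero])
  with past_measurable_mult[OF S_past past]
  have cross: "integral\<^sup>L M (\<lambda>x. S x * d N x * e (W N x)) = 0"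
    by (rule integral_past_mult_noise)
  have "integrable M (\<lambda>x. (S x)\<^sup>2)"
    using S_bound by (intro integrable_abs_bounded[of _ "(B * (\<Sum>k<N. D k))\<^sup>2"])
      (auto intro: power2_le_if_abs_le)
  moreover have "integrable M (\<lambda>x. S x * d N x * e (W N x))"
  proof (rule integrable_abs_bounded)
    fix x assume x: "x \<in> space M"
    have "\<bar>S x\<bar> * \<bar>d N x * e (W N x)\<bar> \<le> B * (\<Sum>k<N. D k) * (D N * B)"
      using S_bound[OF x] abs_noise_step_le[OF bound x]
      by (intro mult_mono) (auto intro: order_trans[OF abs_ge_zero])
    then show "\<bar>S x * d N x * e (W N x)\<bar> \<le> B * (\<Sum>k<N. D k) * (D N * B)"
      by (simp add: abs_mult mult.assoc)
  qed measurable
  moreover have "integrable M (\<lambda>x. (d N x * e (W N x))\<^sup>2)"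
    using abs_noise_step_le[of d D, OF bound] by (intro integrable_abs_bounded[of _ "(D N * B)\<^sup>2"])
      (auto intro: power2_le_if_abs_le)
  moreover have "(\<lambda>x. (noise_sum d (Suc N) x)\<^sup>2)
      = (\<lambda>x. (S x)\<^sup>2 + 2 * (S x * d N x * e (W N x)) + (d N x * e (W N x))\<^sup>2)"
    by (auto simp: S_def noise_sum_Suc power2_eq_square algebra_simps)
  ultimately show ?thesis
    using cross by (simp add: S_def)
qed

lemma integral_noise_sum_sq_le:
  assumes past: "\<And>k. past_measurable k (d k)" and bound: "\<And>k x. x \<in> space M \<Longrightarrow> \<bar>d k x\<bar> \<le> D k"
  shows "integral\<^sup>L M (\<lambda>x. (noise_sum d N x)\<^sup>2) \<le> B\<^sup>2 * (\<Sum>k<N. (D k)\<^sup>2)"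
proof (induction N)
  case 0
  then show ?case by (simp add: noise_sum_def)
next
  case (Suc N)
  have "integral\<^sup>L M (\<lambda>x. (d N x * e (W N x))\<^sup>2) \<le> integral\<^sup>L M (\<lambda>x. (D N * B)\<^sup>2)"
    using abs_noise_step_le[of d D, OF bound] borel_measurable_past[OF past] borel_measurable_noise
    by (intro integral_mono integrable_abs_bounded[of _ "(D N * B)\<^sup>2"]) (auto intro: power2_le_if_abs_le)
  then have "integral\<^sup>L M (\<lambda>x. (d N x * e (W N x))\<^sup>2) \<le> B\<^sup>2 * (D N)\<^sup>2"
    by (simp add: prob_space power_mult_distrib mult.commute)
  moreover have "integral\<^sup>L M (\<lambda>x. (noise_sum d (Suc N) x)\<^sup>2)
    = integral\<^sup>L M (\<lambda>x. (noise_sum d N x)\<^sup>2) + integral\<^sup>L M (\<lambda>x. (d N x * e (W N x))\<^sup>2)"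
    using past bound by (rule integral_noise_sum_Suc_sq)
  ultimately show ?case
    using Suc.IH by (simp add: distrib_left)
qed

text \<open>The coefficients of the sum stopped when it first leaves the \<open>lm\<close>-neighbourhood of its value
  at time \<open>m\<close>; they are still predictable, which gives Kolmogorov's maximal inequality below.\<close>
definition stopped :: "(nat \<Rightarrow> 'a \<Rightarrow> real) \<Rightarrow> nat \<Rightarrow> real \<Rightarrow> nat \<Rightarrow> 'a \<Rightarrow> real" where
  "stopped d m lm k x =
     of_bool (m \<le> k \<and> (\<forall>j\<in>{m..k}. \<bar>noise_sum d j x - noise_sum d m x\<bar> < lm)) * d k x"

lemma past_measurable_stopped:
  assumes past: "\<And>k. past_measurable k (d k)"
  shows "past_measurable k (stopped d m lm k)"
proof -
  have "past_measurable k (\<lambda>x. of_bool (m \<le> k \<and> (\<forall>j\<in>{m..k}. \<bar>noise_sum d j x - noise_sum d m x\<bar> < lm)))"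
  proof (cases "m \<le> k")
    case True
    have "past_measurable k (\<lambda>x. of_bool (\<bar>noise_sum d j x - noise_sum d m x\<bar> < lm))"
      if "j \<in> {m..k}" for j
    proof -
      have "past_measurable j (noise_sum d m)"
        using that by (intro past_measurable_mono[OF past_measurable_noise_sum[OF past]]) auto
      then have "past_measurable j (\<lambda>x. noise_sum d j x - noise_sum d m x)"
        by (intro past_measurable_diff past_measurable_noise_sum[OF past])
      then have "past_measurable j (\<lambda>x. of_bool (\<bar>noise_sum d j x - noise_sum d m x\<bar> < lm))"
        by (rule past_measurable_compose[where \<phi>="\<lambda>t. of_bool (\<bar>t\<bar> < lm)"]) measurable
      then show ?thesis
        by (rule past_measurable_mono) (use that in auto)
    qed
    then have "past_measurable k (\<lambda>x. \<Prod>j\<in>{m..k}. of_bool (\<bar>noise_sum d j x - noise_sum d m x\<bar> < lm))"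
      by (intro past_measurable_prod) auto
    then show ?thesis
      using True by (simp add: prod_of_bool)
  qed (simp add: past_measurable_const)
  then show ?thesis
    unfolding stopped_def using past by (rule past_measurable_mult)
qed

lemma abs_stopped_le:
  "(\<And>k x. x \<in> space M \<Longrightarrow> \<bar>d k x\<bar> \<le> D k) \<Longrightarrow> x \<in> space M \<Longrightarrow> \<bar>stopped d m lm k x\<bar> \<le> of_bool (m \<le> k) * D k"
  by (auto simp: stopped_def intro: order_trans[OF abs_ge_zero])

lemma abs_noise_sum_stopped_ge:
  assumes "\<exists>k\<in>{m..N}. lm \<le> \<bar>noise_sum d k x - noise_sum d m x\<bar>"
  shows "lm \<le> \<bar>noise_sum (stopped d m lm) N x\<bar>"
proof -
  define exceeds where "exceeds k \<longleftrightarrow> m \<le> k \<and> k \<le> N \<and> lm \<le> \<bar>noise_sum d k x - noise_sum d m x\<bar>" for k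
  obtain k1 where "exceeds k1"
    using assms by (auto simp: exceeds_def)
  define k0 where "k0 = (LEAST k. exceeds k)"
  have k0: "m \<le> k0" "k0 \<le> N" "lm \<le> \<bar>noise_sum d k0 x - noise_sum d m x\<bar>"
    using LeastI[of exceeds, OF \<open>exceeds k1\<close>] unfolding k0_def exceeds_def by auto
  have before: "\<bar>noise_sum d j x - noise_sum d m x\<bar> < lm" if "m \<le> j" "j < k0" for j
  proof -
    have "\<not> exceeds j"
      using not_less_Least[of j exceeds] that(2) unfolding k0_def by blast
    then show ?thesis
      using that k0 by (auto simp: exceeds_def)
  qed
  have "noise_sum (stopped d m lm) N x
      = (\<Sum>k<N. of_bool (m \<le> k \<and> (\<forall>j\<in>{m..k}. \<bar>noise_sum d j x - noise_sum d m x\<bar> < lm)) * (d k x * e (W k x)))"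
    by (simp add: noise_sum_def stopped_def mult.assoc)
  also have "\<dots> = (\<Sum>k\<in>{m..<k0}. d k x * e (W k x))"
    using k0 before by (intro sum_until_first_failure) auto
  also have "\<dots> = noise_sum d k0 x - noise_sum d m x"
    using k0 by (simp add: noise_sum_diff)
  finally show ?thesis
    using k0(3) by simp
qed

lemma prob_noise_sum_maximal_le:
  assumes past: "\<And>k. past_measurable k (d k)" and bound: "\<And>k x. x \<in> space M \<Longrightarrow> \<bar>d k x\<bar> \<le> D k"
    and "0 < lm"
  shows "prob {x\<in>space M. \<exists>k\<in>{m..N}. lm \<le> \<bar>noise_sum d k x - noise_sum d m x\<bar>}
           \<le> B\<^sup>2 * (\<Sum>k\<in>{m..<N}. (D k)\<^sup>2) / lm\<^sup>2"
proof -
  define S where "S = noise_sum (stopped d m lm) N"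
  have [measurable]: "S \<in> borel_measurable M"
    unfolding S_def using past_measurable_stopped[OF past]
    by (intro borel_measurable_past[of N] past_measurable_noise_sum)
  have "lm\<^sup>2 \<le> (S x)\<^sup>2" if "\<exists>k\<in>{m..N}. lm \<le> \<bar>noise_sum d k x - noise_sum d m x\<bar>" for x
    using abs_noise_sum_stopped_ge[OF that] \<open>0 < lm\<close> unfolding S_def by (simp flip: abs_le_square_iff)
  then have "prob {x\<in>space M. \<exists>k\<in>{m..N}. lm \<le> \<bar>noise_sum d k x - noise_sum d m x\<bar>}
        \<le> prob {x\<in>space M. lm\<^sup>2 \<le> (S x)\<^sup>2}"
    by (intro finite_measure_mono) auto
  also have "\<dots> \<le> integral\<^sup>L M (\<lambda>x. (S x)\<^sup>2) / lm\<^sup>2"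
  proof (rule integral_Markov_inequality_measure[where A="space M"])
    show "integrable M (\<lambda>x. (S x)\<^sup>2)"
    proof (rule integrable_abs_bounded)
      show "\<bar>(S x)\<^sup>2\<bar> \<le> (B * (\<Sum>k<N. of_bool (m \<le> k) * D k))\<^sup>2" if "x \<in> space M" for x
        using abs_noise_sum_le[of "stopped d m lm" "\<lambda>k. of_bool (m \<le> k) * D k", OF abs_stopped_le[of d D, OF bound] that]
        unfolding S_def by (auto intro: power2_le_if_abs_le)
    qed measurable
  qed (use \<open>0 < lm\<close> in auto)
  also have "\<dots> \<le> B\<^sup>2 * (\<Sum>k<N. (of_bool (m \<le> k) * D k)\<^sup>2) / lm\<^sup>2"
    using integral_noise_sum_sq_le[OF past_measurable_stopped[OF past] abs_stopped_le[of d D, OF bound]]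
    by (simp add: S_def divide_right_mono)
  also have "(\<Sum>k<N. (of_bool (m \<le> k) * D k)\<^sup>2) = (\<Sum>k<N. of_bool (m \<le> k) * (D k)\<^sup>2)"
    by (intro sum.cong) auto
  also have "\<dots> = (\<Sum>k\<in>{..<N} \<inter> {k. m \<le> k}. (D k)\<^sup>2)"
    by simp
  also have "{..<N} \<inter> {k. m \<le> k} = {m..<N}"
    by auto
  finally show ?thesis .
qed

lemma prob_noise_sum_tail_le:
  assumes past: "\<And>k. past_measurable k (d k)" and bound: "\<And>k x. x \<in> space M \<Longrightarrow> \<bar>d k x\<bar> \<le> D k"
    and summable: "summable (\<lambda>k. (D k)\<^sup>2)" and "0 < lm"
  shows "prob {x\<in>space M. \<exists>k\<ge>m. lm < \<bar>noise_sum d k x - noise_sum d m x\<bar>}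
           \<le> B\<^sup>2 * (\<Sum>i. (D (i + m))\<^sup>2) / lm\<^sup>2"
proof -
  note [measurable] = borel_measurable_past[OF past_measurable_noise_sum[OF past]]
  define A where "A n = {x\<in>space M. \<exists>k\<in>{m..m+n}. lm \<le> \<bar>noise_sum d k x - noise_sum d m x\<bar>}" for n
  have A_sets: "range A \<subseteq> sets M"
    unfolding A_def by auto
  have "incseq A"
    unfolding A_def by (intro incseq_SucI) force
  then have lim: "(\<lambda>n. prob (A n)) \<longlonglongrightarrow> prob (\<Union>(range A))"
    using A_sets by (intro finite_Lim_measure_incseq)
  have "prob (A n) \<le> B\<^sup>2 * (\<Sum>i. (D (i + m))\<^sup>2) / lm\<^sup>2" for n
  proof -
    have "prob (A n) \<le> B\<^sup>2 * (\<Sum>k\<in>{m..<m+n}. (D k)\<^sup>2) / lm\<^sup>2"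
      unfolding A_def using past bound \<open>0 < lm\<close> by (rule prob_noise_sum_maximal_le)
    also have "(\<Sum>k\<in>{m..<m+n}. (D k)\<^sup>2) = (\<Sum>i<n. (D (i + m))\<^sup>2)"
      using sum.shift_bounds_nat_ivl[of "\<lambda>k. (D k)\<^sup>2" 0 m n] by (simp add: lessThan_atLeast0 add.commute)
    also have "\<dots> \<le> (\<Sum>i. (D (i + m))\<^sup>2)"
      using summable_ignore_initial_segment[OF summable, of m] by (intro sum_le_suminf) auto
    finally show ?thesis by (simp add: divide_right_mono mult_left_mono)
  qed
  then have "prob (\<Union>(range A)) \<le> B\<^sup>2 * (\<Sum>i. (D (i + m))\<^sup>2) / lm\<^sup>2"
    by (intro LIMSEQ_le_const2[OF lim]) auto
  moreover have "{x\<in>space M. \<exists>k\<ge>m. lm < \<bar>noise_sum d k x - noise_sum d m x\<bar>} \<subseteq> \<Union>(range A)"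
  proof
    fix x assume "x \<in> {x\<in>space M. \<exists>k\<ge>m. lm < \<bar>noise_sum d k x - noise_sum d m x\<bar>}"
    then obtain k where "x \<in> space M" "m \<le> k" "lm < \<bar>noise_sum d k x - noise_sum d m x\<bar>"
      by auto
    then have "x \<in> A (k - m)"
      unfolding A_def by force
    then show "x \<in> \<Union>(range A)" by blast
  qed
  then have "prob {x\<in>space M. \<exists>k\<ge>m. lm < \<bar>noise_sum d k x - noise_sum d m x\<bar>} \<le> prob (\<Union>(range A))"
    using A_sets by (intro finite_measure_mono) auto
  ultimately show ?thesis by linarith
qed

lemma AE_noise_sum_oscillation_le:
  assumes past: "\<And>k. past_measurable k (d k)" and bound: "\<And>k x. x \<in> space M \<Longrightarrow> \<bar>d k x\<bar> \<le> D k"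
    and summable: "summable (\<lambda>k. (D k)\<^sup>2)" and "0 < lm"
  shows "AE x in M. \<exists>m. \<forall>k\<ge>m. \<bar>noise_sum d k x - noise_sum d m x\<bar> \<le> lm"
proof (rule AE_I')
  note [measurable] = borel_measurable_past[OF past_measurable_noise_sum[OF past]]
  define bad where "bad = {x\<in>space M. \<forall>m. \<exists>k\<ge>m. lm < \<bar>noise_sum d k x - noise_sum d m x\<bar>}"
  have "prob bad \<le> B\<^sup>2 * (\<Sum>i. (D (i + m))\<^sup>2) / lm\<^sup>2" for m
    using prob_noise_sum_tail_le[OF assms, of m]
    by (rule order_trans[rotated]) (auto simp: bad_def intro!: finite_measure_mono)
  moreover have "(\<lambda>m. B\<^sup>2 * (\<Sum>i. (D (i + m))\<^sup>2) / lm\<^sup>2) \<longlonglongrightarrow> B\<^sup>2 * 0 / lm\<^sup>2"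
    using suminf_exist_split2[OF summable] \<open>0 < lm\<close> by (intro tendsto_intros) auto
  ultimately have "prob bad \<le> 0"
    by (intro LIMSEQ_le_const) auto
  then show "bad \<in> null_sets M"
    unfolding bad_def by (auto simp: null_sets_def emeasure_eq_measure measure_le_0_iff)
qed (auto simp: not_le)

theorem AE_convergent_noise_sum:
  assumes "\<And>k. past_measurable k (d k)" and "\<And>k x. x \<in> space M \<Longrightarrow> \<bar>d k x\<bar> \<le> D k"
    and "summable (\<lambda>k. (D k)\<^sup>2)"
  shows "AE x in M. convergent (\<lambda>N. noise_sum d N x)"
proof -
  have "AE x in M. \<forall>j. \<exists>m. \<forall>k\<ge>m. \<bar>noise_sum d k x - noise_sum d m x\<bar> \<le> 1 / Suc j"
    using assms by (subst AE_all_countable) (intro allI AE_noise_sum_oscillation_le, auto)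
  then show ?thesis
  proof (rule AE_mp, intro AE_I2 impI)
    fix x assume small: "\<forall>j. \<exists>m. \<forall>k\<ge>m. \<bar>noise_sum d k x - noise_sum d m x\<bar> \<le> 1 / Suc j"
    have "\<exists>m. \<forall>k\<ge>m. dist (noise_sum d k x) (noise_sum d m x) < r" if "0 < r" for r
    proof -
      obtain j where j: "1 / Suc j < r"
        using \<open>0 < r\<close> reals_Archimedean by (auto simp: inverse_eq_divide)
      obtain m where "\<forall>k\<ge>m. \<bar>noise_sum d k x - noise_sum d m x\<bar> \<le> 1 / Suc j"
        using small by blast
      with j have "\<forall>k\<ge>m. dist (noise_sum d k x) (noise_sum d m x) < r"
        by (auto simp: dist_real_def)
      then show ?thesis ..
    qed
    then have "Cauchy (\<lambda>N. noise_sum d N x)"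
      unfolding Cauchy_altdef2 by blast
    then show "convergent (\<lambda>N. noise_sum d N x)"
      by (simp add: Cauchy_convergent_iff)
  qed
qed

end

section \<open>Perturbed gradient schemes\<close>

lemma summable_if_telescoping_bound:
  fixes q F r :: "nat \<Rightarrow> real"
  assumes "\<And>n. 0 \<le> q n" "\<And>n. q n \<le> F n - F (Suc n) + r n" "\<And>n. \<bar>F n\<bar> \<le> K" "summable r"
  shows "summable q"
proof -
  obtain R where R: "\<And>N. norm (\<Sum>n<N. r n) \<le> R"
    using convergent_imp_Bseq[OF \<open>summable r\<close>[unfolded summable_iff_convergent]] by (metis BseqE)
  have "(\<Sum>n<N. q n) \<le> 2 * K + R" for N
  proof -
    have "(\<Sum>n<N. q n) \<le> (\<Sum>n<N. F n - F (Suc n)) + (\<Sum>n<N. r n)"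
      using assms(2) by (simp add: sum.distrib[symmetric] sum_mono)
    also have "\<dots> = F 0 - F N + (\<Sum>n<N. r n)"
      by (simp add: sum_lessThan_telescope')
    also have "\<dots> \<le> 2 * K + R"
      using assms(3)[of 0] assms(3)[of N] R[of N] unfolding real_norm_def abs_le_iff by linarith
    finally show ?thesis .
  qed
  then show ?thesis
    using assms(1) by (intro summableI_nonneg_bounded)
qed

lemma frequently_small_if_summable_weighted_sq:
  fixes a b :: "nat \<Rightarrow> real"
  assumes "\<And>n. 0 \<le> a n" "\<not> summable a" "summable (\<lambda>n. a n * (b n)\<^sup>2)" "0 < \<epsilon>"
  shows "\<exists>k\<ge>N. \<bar>b k\<bar> < \<epsilon>"
proof (rule ccontr)
  assume "\<not> (\<exists>k\<ge>N. \<bar>b k\<bar> < \<epsilon>)"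
  then have "norm (a k) \<le> a k * (b k)\<^sup>2 / \<epsilon>\<^sup>2" if "N \<le> k" for k
    using that assms(1,4) power_mono[of \<epsilon> "\<bar>b k\<bar>" 2]
    by (auto simp: not_less pos_le_divide_eq intro!: mult_left_mono)
  then have "summable a"
    using summable_divide[OF assms(3)] by (rule summable_comparison_test'[rotated])
  with assms(2) show False ..
qed

lemma norm_excursion_le:
  fixes v g :: "nat \<Rightarrow> 'a::real_normed_vector"
  assumes "n \<le> k" "\<And>j. 0 \<le> a j" "0 < \<epsilon>" "\<And>j. n \<le> j \<Longrightarrow> j < k \<Longrightarrow> \<epsilon> \<le> norm (g j)"
  shows "norm (v k - v n)
    \<le> norm (\<Sum>j\<in>{n..<k}. v (Suc j) - v j + a j *\<^sub>R g j) + (\<Sum>j\<in>{n..<k}. a j * (norm (g j))\<^sup>2) / \<epsilon>"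
proof -
  have "v k - v n = (\<Sum>j\<in>{n..<k}. v (Suc j) - v j + a j *\<^sub>R g j) - (\<Sum>j\<in>{n..<k}. a j *\<^sub>R g j)"
    using sum_Suc_diff'[OF assms(1), of v] by (simp add: sum.distrib)
  also have "norm \<dots> \<le> norm (\<Sum>j\<in>{n..<k}. v (Suc j) - v j + a j *\<^sub>R g j) + norm (\<Sum>j\<in>{n..<k}. a j *\<^sub>R g j)"
    by (rule norm_triangle_ineq4)
  also have "norm (\<Sum>j\<in>{n..<k}. a j *\<^sub>R g j) \<le> (\<Sum>j\<in>{n..<k}. a j * norm (g j))"
    by (rule order_trans[OF norm_sum]) (simp add: assms(2) abs_of_nonneg)
  also have "(\<Sum>j\<in>{n..<k}. a j * norm (g j)) \<le> (\<Sum>j\<in>{n..<k}. a j * (norm (g j))\<^sup>2 / \<epsilon>)"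
  proof (rule sum_mono)
    fix j assume "j \<in> {n..<k}"
    then have "a j * norm (g j) * \<epsilon> \<le> a j * norm (g j) * norm (g j)"
      using assms by (intro mult_left_mono) auto
    then show "a j * norm (g j) \<le> a j * (norm (g j))\<^sup>2 / \<epsilon>"
      using assms(3) by (simp add: pos_le_divide_eq power2_eq_square mult.assoc)
  qed
  finally show ?thesis
    by (simp add: sum_divide_distrib)
qed

text \<open>Since \<open>\<Sum>a\<^sub>n = \<infinity>\<close>, \<open>G(v\<^sub>n)\<close> is small infinitely often.  An excursion from \<open>|G(v\<^sub>n)| \<ge> 2\<epsilon>\<close>
  to the next time with \<open>|G(v\<^sub>k)| < \<epsilon>\<close> moves \<open>v\<close> by at most the tail of the perturbation series plus
  \<open>\<Sum>a\<^sub>j |G(v\<^sub>j)|\<^sup>2 / \<epsilon>\<close>, which is eventually below the modulus of uniform continuity of \<open>G\<close>.\<close>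
lemma tendsto_zero_if_summable_weighted_sq:
  fixes v :: "nat \<Rightarrow> 'a::banach" and G :: "'a \<Rightarrow> 'a"
  assumes unif: "uniformly_continuous_on S G" and in_S: "\<And>n. v n \<in> S"
    and nonneg: "\<And>n. 0 \<le> a n" and diverge: "\<not> summable a"
    and energy: "summable (\<lambda>n. a n * (norm (G (v n)))\<^sup>2)"
    and perturbation: "summable (\<lambda>n. v (Suc n) - v n + a n *\<^sub>R G (v n))"
  shows "(\<lambda>n. G (v n)) \<longlonglongrightarrow> 0"
proof (rule LIMSEQ_I)
  fix r :: real assume "0 < r"
  define \<epsilon> where "\<epsilon> = r / 2"
  have "0 < \<epsilon>"
    using \<open>0 < r\<close> by (simp add: \<epsilon>_def)
  obtain \<delta> where "0 < \<delta>" and \<delta>: "\<And>x x'. x \<in> S \<Longrightarrow> x' \<in> S \<Longrightarrow> dist x' x < \<delta> \<Longrightarrow> dist (G x') (G x) < \<epsilon>"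
    using unif \<open>0 < \<epsilon>\<close> unfolding uniformly_continuous_on_def by metis
  obtain N1 where N1: "\<And>m k. N1 \<le> m \<Longrightarrow> norm (\<Sum>j\<in>{m..<k}. a j * (norm (G (v j)))\<^sup>2) < \<epsilon> * \<delta> / 2"
    using energy \<open>0 < \<epsilon>\<close> \<open>0 < \<delta>\<close> unfolding summable_Cauchy by (metis half_gt_zero mult_pos_pos)
  obtain N2 where N2: "\<And>m k. N2 \<le> m \<Longrightarrow> norm (\<Sum>j\<in>{m..<k}. v (Suc j) - v j + a j *\<^sub>R G (v j)) < \<delta> / 2"
    using perturbation \<open>0 < \<delta>\<close> unfolding summable_Cauchy by (metis half_gt_zero)
  show "\<exists>no. \<forall>n\<ge>no. norm (G (v n) - 0) < r"
  proof (intro exI allI impI)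
    fix n assume n: "max N1 N2 \<le> n"
    show "norm (G (v n) - 0) < r"
    proof (rule ccontr)
      assume "\<not> norm (G (v n) - 0) < r"
      then have large: "2 * \<epsilon> \<le> norm (G (v n))"
        by (simp add: \<epsilon>_def)
      obtain k where "n \<le> k \<and> \<bar>norm (G (v k))\<bar> < \<epsilon>"
        and first: "\<And>j. j < k \<Longrightarrow> \<not> (n \<le> j \<and> \<bar>norm (G (v j))\<bar> < \<epsilon>)"
        using frequently_small_if_summable_weighted_sq[OF nonneg diverge _ \<open>0 < \<epsilon>\<close>, of "\<lambda>j. norm (G (v j))" n]
          energy exists_least_iff[of "\<lambda>k. n \<le> k \<and> \<bar>norm (G (v k))\<bar> < \<epsilon>"] by auto
      then have "n \<le> k" and small: "norm (G (v k)) < \<epsilon>"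
        by auto
      have "norm (v k - v n) \<le> norm (\<Sum>j\<in>{n..<k}. v (Suc j) - v j + a j *\<^sub>R G (v j))
          + (\<Sum>j\<in>{n..<k}. a j * (norm (G (v j)))\<^sup>2) / \<epsilon>"
        using first by (intro norm_excursion_le \<open>n \<le> k\<close> nonneg \<open>0 < \<epsilon>\<close>) (auto simp: not_less)
      also have "\<dots> < \<delta> / 2 + (\<epsilon> * \<delta> / 2) / \<epsilon>"
        using N1[of n k] N2[of n k] n \<open>0 < \<epsilon>\<close> by (intro add_strict_mono divide_strict_right_mono) auto
      also have "\<dots> = \<delta>"
        using \<open>0 < \<epsilon>\<close> by simp
      finally have "dist (G (v k)) (G (v n)) < \<epsilon>"
        using in_S by (intro \<delta>) (auto simp: dist_norm)
      then show False
        using large small norm_triangle_ineq2[of "G (v n)" "G (v k)"] by (simp add: dist_norm norm_minus_commute)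
    qed
  qed
qed

section \<open>Oja's iteration along a fixed sample path\<close>

text \<open>\<open>rayleigh_grad A u = (I - u u\<^sup>T) A u\<close>, half the gradient of the Rayleigh quotient on the sphere.\<close>
definition rayleigh_grad :: "real^'n^'n \<Rightarrow> real^'n \<Rightarrow> real^'n" where
  "rayleigh_grad A u = A *v u - inner u (A *v u) *\<^sub>R u"

lemma rayleigh_grad_diff: "rayleigh_grad (A - B) u = rayleigh_grad A u - rayleigh_grad B u"
  by (simp add: rayleigh_grad_def matrix_vector_mult_diff_rdistrib inner_diff_right algebra_simps)

lemma inner_rayleigh_grad_self: "norm u = 1 \<Longrightarrow> inner u (rayleigh_grad A u) = 0"
  by (simp add: rayleigh_grad_def inner_diff_right power2_norm_eq_inner[symmetric])

lemma continuous_on_rayleigh_grad: "continuous_on S (rayleigh_grad A)"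
  unfolding rayleigh_grad_def by (intro continuous_intros)

lemma inner_rayleigh_grad_eq_sum:
  "inner (rayleigh_grad A u) y = (\<Sum>i\<in>UNIV. \<Sum>j\<in>UNIV. A $ i $ j * (y $ i * u $ j - inner u y * u $ i * u $ j))"
proof -
  have "inner (A *v u) y = (\<Sum>i\<in>UNIV. \<Sum>j\<in>UNIV. A $ i $ j * (y $ i * u $ j))"
    by (simp add: inner_vec_def matrix_vector_mult_def sum_distrib_left mult_ac)
  moreover have "inner u (A *v u) * inner u y = (\<Sum>i\<in>UNIV. \<Sum>j\<in>UNIV. A $ i $ j * (inner u y * u $ i * u $ j))"
    by (simp add: inner_vec_def matrix_vector_mult_def sum_distrib_left sum_distrib_right mult_ac)
  ultimately show ?thesis
    by (simp add: rayleigh_grad_def inner_diff_left right_diff_distrib sum_subtractf)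
qed

lemma norm_rayleigh_grad_le:
  assumes "norm u = 1" "norm (A *v u) \<le> G" shows "norm (rayleigh_grad A u) \<le> 2 * G"
proof -
  have "\<bar>inner u (A *v u)\<bar> \<le> G"
    using Cauchy_Schwarz_ineq2[of u "A *v u"] assms by simp
  then have "norm (inner u (A *v u) *\<^sub>R u) \<le> G"
    using assms(1) by simp
  then show ?thesis
    unfolding rayleigh_grad_def using norm_triangle_ineq4[of "A *v u" "inner u (A *v u) *\<^sub>R u"] assms(2)
    by linarith
qed

lemma projector_mult: "(mat 1 - outer v v) *v y = y - inner v y *\<^sub>R v"
proof -
  have "outer v v *v y = inner v y *\<^sub>R v"
    by (simp add: vec_eq_iff matrix_vector_mult_def outer_def inner_vec_def sum_distrib_left mult_ac)
  then show ?thesis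
    by (simp add: matrix_vector_mult_diff_rdistrib)
qed

lemma oja_iter_Suc_sgn:
  "oja_iter a Hs v0 (Suc n) = sgn (oja_iter a Hs v0 n - a n *\<^sub>R rayleigh_grad (Hs n) (oja_iter a Hs v0 n))"
  by (simp add: Let_def projector_mult rayleigh_grad_def scalar_mult_eq_scaleR sgn_div_norm divide_inverse_commute)

lemma oja_iter_cong: "(\<And>k. k < n \<Longrightarrow> Hs k = Hs' k) \<Longrightarrow> oja_iter a Hs v0 n = oja_iter a Hs' v0 n"
  by (induction n) (auto simp: Let_def)

declare oja_iter.simps(2) [simp del]

lemma normalized_step:
  fixes u h :: "'a::real_inner"
  assumes "norm u = 1" "inner u h = 0" "0 \<le> c"
  shows "norm (sgn (u - c *\<^sub>R h)) = 1"
    and "norm (sgn (u - c *\<^sub>R h) - u + c *\<^sub>R h) \<le> c\<^sup>2 * (norm h)\<^sup>2"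
    and "norm (sgn (u - c *\<^sub>R h) - u + c *\<^sub>R h) \<le> c * norm h"
proof -
  define w where "w = u - c *\<^sub>R h"
  have "inner u u = 1"
    using assms(1) by (simp add: dot_square_norm)
  then have w_sq: "(norm w)\<^sup>2 = 1 + c\<^sup>2 * (norm h)\<^sup>2"
    using assms(2) unfolding w_def power2_norm_eq_inner
    by (simp add: inner_diff_left inner_diff_right inner_commute power2_eq_square algebra_simps)
  then have "1\<^sup>2 \<le> (norm w)\<^sup>2"
    by simp
  then have "1 \<le> norm w"
    by (rule power2_le_imp_le) simp
  have "norm (sgn w - u + c *\<^sub>R h) = norm ((1 / norm w - 1) *\<^sub>R w)"
    by (simp add: w_def sgn_div_norm divide_inverse_commute algebra_simps)
  also have "\<dots> = norm w - 1"
    using \<open>1 \<le> norm w\<close> by (auto simp: abs_if left_diff_distrib)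
  finally have err: "norm (sgn w - u + c *\<^sub>R h) = norm w - 1" .
  show "norm (sgn (u - c *\<^sub>R h)) = 1"
    using \<open>1 \<le> norm w\<close> by (auto simp: w_def norm_sgn)
  have "norm w * 1 \<le> norm w * norm w"
    using \<open>1 \<le> norm w\<close> by (intro mult_left_mono) auto
  then show "norm (sgn (u - c *\<^sub>R h) - u + c *\<^sub>R h) \<le> c\<^sup>2 * (norm h)\<^sup>2"
    using err w_sq by (simp add: w_def power2_eq_square)
  have "norm w \<le> 1 + c * norm h"
    using norm_triangle_ineq4[of u "c *\<^sub>R h"] assms by (simp add: w_def)
  then show "norm (sgn (u - c *\<^sub>R h) - u + c *\<^sub>R h) \<le> c * norm h"
    using err by (simp add: w_def)
qed

lemma norm_oja_iter: "norm v0 = 1 \<Longrightarrow> (\<And>n. 0 \<le> a n) \<Longrightarrow> norm (oja_iter a Hs v0 n) = 1"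
  by (induction n) (simp_all only: oja_iter_Suc_sgn normalized_step(1) inner_rayleigh_grad_self oja_iter.simps(1))

lemma inner_symmetric_matrix:
  assumes "transpose A = A" shows "inner x (A *v y) = inner (A *v x) (y::real^'n)"
proof -
  have "x v* A = A *v x"
    using vector_transpose_matrix[of x A] assms by simp
  then show ?thesis
    by (simp flip: dot_lmul_matrix)
qed

lemma quadratic_form_increment:
  assumes "transpose A = A"
  shows "inner (x + d) (A *v (x + d)) - inner x (A *v x) = 2 * inner (A *v x) d + inner d (A *v (d::real^'n))"
  using inner_symmetric_matrix[OF assms, of x d]
  by (simp add: matrix_vector_right_distrib inner_add_left inner_add_right inner_commute)

lemma norm_matrix_vector_le:
  fixes A :: "real^'n^'m" shows "norm (A *v x) \<le> onorm ((*v) A) * norm x"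
  using onorm[OF matrix_vector_mul_bounded_linear[of A]] by simp

locale oja_path =
  fixes A :: "real^'d^'d" and Hs :: "nat \<Rightarrow> real^'d^'d" and a :: "nat \<Rightarrow> real"
    and v0 :: "real^'d" and G :: real
  assumes symmetric: "transpose A = A"
    and norm_v0: "norm v0 = 1"
    and step_pos: "\<And>n. 0 < a n"
    and summable_step_sq: "summable (\<lambda>n. (a n)\<^sup>2)"
    and Hs_bounded: "\<And>n u. norm u = 1 \<Longrightarrow> norm (Hs n *v u) \<le> G"
begin

abbreviation v :: "nat \<Rightarrow> real^'d" where
  "v \<equiv> oja_iter a Hs v0"

definition noise :: "nat \<Rightarrow> real^'d" where
  "noise n = rayleigh_grad (Hs n) (v n) - rayleigh_grad A (v n)"

definition normalization_error :: "nat \<Rightarrow> real^'d" where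
  "normalization_error n = v (Suc n) - v n + a n *\<^sub>R rayleigh_grad (Hs n) (v n)"

lemma norm_v: "norm (v n) = 1"
  using norm_v0 step_pos by (intro norm_oja_iter less_imp_le)

lemma norm_grad_Hs_le: "norm (rayleigh_grad (Hs n) (v n)) \<le> 2 * G"
  using norm_v Hs_bounded[OF norm_v] by (rule norm_rayleigh_grad_le)

lemma normalization_error_bounds:
  shows "norm (normalization_error n) \<le> (2 * G)\<^sup>2 * (a n)\<^sup>2"
    and "norm (normalization_error n) \<le> a n * norm (rayleigh_grad (Hs n) (v n))"
proof -
  define h where "h = rayleigh_grad (Hs n) (v n)"
  have err: "normalization_error n = sgn (v n - a n *\<^sub>R h) - v n + a n *\<^sub>R h"
    by (simp add: normalization_error_def oja_iter_Suc_sgn h_def)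
  have "norm (normalization_error n) \<le> (a n)\<^sup>2 * (norm h)\<^sup>2"
    using normalized_step(2)[of "v n" h "a n"] norm_v inner_rayleigh_grad_self[OF norm_v] step_pos[of n]
    by (simp add: err h_def)
  also have "\<dots> \<le> (a n)\<^sup>2 * (2 * G)\<^sup>2"
    using norm_grad_Hs_le by (intro mult_left_mono power_mono) (auto simp: h_def)
  finally show "norm (normalization_error n) \<le> (2 * G)\<^sup>2 * (a n)\<^sup>2"
    by (simp only: mult.commute)
  show "norm (normalization_error n) \<le> a n * norm (rayleigh_grad (Hs n) (v n))"
    using normalized_step(3)[of "v n" h "a n"] norm_v inner_rayleigh_grad_self[OF norm_v] step_pos[of n]
    by (simp add: err h_def)
qed

lemma norm_increment_le: "norm (v (Suc n) - v n) \<le> 4 * G * a n"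
proof -
  have "norm (v (Suc n) - v n)
      \<le> norm (normalization_error n) + norm (a n *\<^sub>R rayleigh_grad (Hs n) (v n))"
    unfolding normalization_error_def by (rule order_trans[OF _ norm_triangle_ineq4]) simp
  also have "\<dots> \<le> a n * (2 * G) + a n * (2 * G)"
    using normalization_error_bounds(2)[of n] norm_grad_Hs_le[of n] step_pos[of n]
    by (intro add_mono) (auto intro: order_trans mult_left_mono)
  finally show ?thesis by simp
qed

lemma summable_normalization_error: "summable normalization_error"
proof (rule summable_norm_cancel)
  show "summable (\<lambda>n. norm (normalization_error n))"
    using summable_mult[OF summable_step_sq, of "(2 * G)\<^sup>2"]
    by (rule summable_comparison_test'[where N=0]) (use normalization_error_bounds(1) in simp)
qed

text \<open>The Rayleigh quotient decreases along \<open>v\<close> by \<open>2 a\<^sub>n |g\<^sub>n|\<^sup>2\<close> up to the noise term and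
  second order terms; the key identity is \<open>\<langle>A v, h\<rangle> = \<langle>g, h\<rangle>\<close> for \<open>h \<bottom> v\<close>.\<close>
lemma rayleigh_quotient_increment_eq:
  "inner (v (Suc n)) (A *v v (Suc n)) - inner (v n) (A *v v n)
      + 2 * a n * (norm (rayleigh_grad A (v n)))\<^sup>2 + 2 * a n * inner (rayleigh_grad A (v n)) (noise n)
    = 2 * inner (A *v v n) (normalization_error n) + inner (v (Suc n) - v n) (A *v (v (Suc n) - v n))"
proof -
  define g h \<Delta> where "g = rayleigh_grad A (v n)" and "h = rayleigh_grad (Hs n) (v n)"
    and "\<Delta> = v (Suc n) - v n"
  have "inner (A *v v n) h = inner (g + inner (v n) (A *v v n) *\<^sub>R v n) h"
    by (simp add: g_def rayleigh_grad_def)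
  also have "\<dots> = inner g h"
    using inner_rayleigh_grad_self[OF norm_v[of n], where A="Hs n"] by (simp add: h_def inner_add_left)
  also have "\<dots> = (norm g)\<^sup>2 + inner g (noise n)"
    by (simp add: h_def g_def noise_def inner_diff_right power2_norm_eq_inner)
  finally have "inner (A *v v n) \<Delta>
      = inner (A *v v n) (normalization_error n) - a n * ((norm g)\<^sup>2 + inner g (noise n))"
    by (simp add: \<Delta>_def h_def normalization_error_def inner_diff_right inner_add_right)
  then show ?thesis
    using quadratic_form_increment[OF symmetric, of "v n" \<Delta>] by (simp add: \<Delta>_def g_def algebra_simps)
qed

lemma rayleigh_quotient_increment:
  obtains C where "\<And>n. \<bar>inner (v (Suc n)) (A *v v (Suc n)) - inner (v n) (A *v v n)
      + 2 * a n * (norm (rayleigh_grad A (v n)))\<^sup>2 + 2 * a n * inner (rayleigh_grad A (v n)) (noise n)\<bar>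
    \<le> C * (a n)\<^sup>2"
proof
  define K where "K = onorm ((*v) A)"
  have "K \<ge> 0"
    unfolding K_def by (intro onorm_pos_le matrix_vector_mul_bounded_linear)
  fix n
  define \<Delta> where "\<Delta> = v (Suc n) - v n"
  have "\<bar>inner (A *v v n) (normalization_error n)\<bar> \<le> norm (A *v v n) * norm (normalization_error n)"
    by (rule Cauchy_Schwarz_ineq2)
  also have "\<dots> \<le> K * ((2 * G)\<^sup>2 * (a n)\<^sup>2)"
    using norm_matrix_vector_le[of A "v n"] normalization_error_bounds(1)[of n] \<open>K \<ge> 0\<close>
    by (intro mult_mono) (auto simp: K_def norm_v)
  finally have first: "\<bar>inner (A *v v n) (normalization_error n)\<bar> \<le> K * ((2 * G)\<^sup>2 * (a n)\<^sup>2)" .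
  have "\<bar>inner \<Delta> (A *v \<Delta>)\<bar> \<le> norm \<Delta> * norm (A *v \<Delta>)"
    by (rule Cauchy_Schwarz_ineq2)
  also have "\<dots> \<le> norm \<Delta> * (K * norm \<Delta>)"
    using norm_matrix_vector_le[of A \<Delta>] by (intro mult_left_mono) (auto simp: K_def)
  also have "\<dots> = K * (norm \<Delta>)\<^sup>2"
    by (simp add: power2_eq_square)
  also have "\<dots> \<le> K * (4 * G * a n)\<^sup>2"
    using norm_increment_le[of n] \<open>K \<ge> 0\<close> by (intro mult_left_mono power_mono) (auto simp: \<Delta>_def)
  finally have second: "\<bar>inner \<Delta> (A *v \<Delta>)\<bar> \<le> K * (4 * G * a n)\<^sup>2" .
  show "\<bar>inner (v (Suc n)) (A *v v (Suc n)) - inner (v n) (A *v v n)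
      + 2 * a n * (norm (rayleigh_grad A (v n)))\<^sup>2 + 2 * a n * inner (rayleigh_grad A (v n)) (noise n)\<bar>
    \<le> (2 * K * (2 * G)\<^sup>2 + K * (4 * G)\<^sup>2) * (a n)\<^sup>2"
    unfolding rayleigh_quotient_increment_eq \<Delta>_def[symmetric] using first second
    by (simp add: power_mult_distrib algebra_simps)
qed

lemma summable_weighted_grad_sq:
  assumes "summable (\<lambda>n. a n * inner (rayleigh_grad A (v n)) (noise n))"
  shows "summable (\<lambda>n. a n * (norm (rayleigh_grad A (v n)))\<^sup>2)"
proof -
  obtain C where C: "\<And>n. \<bar>inner (v (Suc n)) (A *v v (Suc n)) - inner (v n) (A *v v n)
      + 2 * a n * (norm (rayleigh_grad A (v n)))\<^sup>2 + 2 * a n * inner (rayleigh_grad A (v n)) (noise n)\<bar>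
    \<le> C * (a n)\<^sup>2"
    using rayleigh_quotient_increment by metis
  have "summable (\<lambda>n. 2 * a n * (norm (rayleigh_grad A (v n)))\<^sup>2)"
  proof (rule summable_if_telescoping_bound)
    show "0 \<le> 2 * a n * (norm (rayleigh_grad A (v n)))\<^sup>2" for n
      using step_pos[of n] by simp
    show "2 * a n * (norm (rayleigh_grad A (v n)))\<^sup>2 \<le> inner (v n) (A *v v n) - inner (v (Suc n)) (A *v v (Suc n))
        + (C * (a n)\<^sup>2 - 2 * a n * inner (rayleigh_grad A (v n)) (noise n))" for n
      using C[of n] by linarith
    show "\<bar>inner (v n) (A *v v n)\<bar> \<le> onorm ((*v) A)" for n
      using Cauchy_Schwarz_ineq2[of "v n" "A *v v n"] norm_matrix_vector_le[of A "v n"] by (simp add: norm_v)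
    show "summable (\<lambda>n. C * (a n)\<^sup>2 - 2 * a n * inner (rayleigh_grad A (v n)) (noise n))"
      using summable_mult[OF summable_step_sq, of C] summable_mult[OF assms, of 2]
      by (intro summable_diff) (simp_all add: mult.assoc)
  qed
  then show ?thesis
    by (simp add: mult.assoc)
qed

theorem rayleigh_grad_tendsto_zero:
  assumes "\<not> summable a"
    and "summable (\<lambda>n. a n *\<^sub>R noise n)"
    and "summable (\<lambda>n. a n * inner (rayleigh_grad A (v n)) (noise n))"
  shows "(\<lambda>n. rayleigh_grad A (v n)) \<longlonglongrightarrow> 0"
proof (rule tendsto_zero_if_summable_weighted_sq[where G="rayleigh_grad A" and S="sphere 0 1"])
  show "uniformly_continuous_on (sphere 0 1) (rayleigh_grad A)"
    by (intro compact_uniformly_continuous continuous_on_rayleigh_grad compact_sphere)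
  show "v n \<in> sphere 0 1" for n
    by (simp add: norm_v)
  show "summable (\<lambda>n. a n * (norm (rayleigh_grad A (v n)))\<^sup>2)"
    using assms(3) by (rule summable_weighted_grad_sq)
  have "v (Suc n) - v n + a n *\<^sub>R rayleigh_grad A (v n) = normalization_error n - a n *\<^sub>R noise n" for n
    by (simp add: normalization_error_def noise_def algebra_simps)
  then show "summable (\<lambda>n. v (Suc n) - v n + a n *\<^sub>R rayleigh_grad A (v n))"
    using summable_normalization_error assms(2) by (simp add: summable_diff)
qed (use assms(1) step_pos in \<open>auto intro: less_imp_le\<close>)

end

section \<open>Oja's iteration with independent samples\<close>

lemma summable_if_summable_inner_Basis:
  fixes f :: "nat \<Rightarrow> 'a::euclidean_space"
  assumes "\<And>b. b \<in> Basis \<Longrightarrow> summable (\<lambda>n. inner (f n) b)"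
  shows "summable f"
proof -
  have "summable (\<lambda>n. \<Sum>b\<in>Basis. inner (f n) b *\<^sub>R b)"
    using assms by (intro summable_sum summable_scaleR_left)
  then show ?thesis
    by (simp add: euclidean_representation)
qed

lemma eigenvector_if_rayleigh_grad_tendsto_zero:
  assumes "(\<lambda>n. rayleigh_grad A (x n)) \<longlonglongrightarrow> 0" "strict_mono r" "(\<lambda>n. x (r n)) \<longlonglongrightarrow> u"
  shows "\<exists>c. A *v u = c *s u"
proof -
  have "(\<lambda>n. rayleigh_grad A (x (r n))) \<longlonglongrightarrow> rayleigh_grad A u"
    using continuous_on_rayleigh_grad[of UNIV A] assms(3)
    by (intro isCont_tendsto_compose[where g="rayleigh_grad A"]) (auto simp: continuous_on_eq_continuous_at)
  moreover have "(\<lambda>n. rayleigh_grad A (x (r n))) \<longlonglongrightarrow> 0"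
    using LIMSEQ_subseq_LIMSEQ[OF assms(1,2)] by (simp add: comp_def)
  ultimately have "rayleigh_grad A u = 0"
    by (rule LIMSEQ_unique)
  then have "A *v u = inner u (A *v u) *s u"
    by (simp add: rayleigh_grad_def scalar_mult_eq_scaleR)
  then show ?thesis ..
qed

lemma borel_measurable_rayleigh_grad [measurable (raw)]:
  fixes f :: "'a \<Rightarrow> real^'n^'n"
  assumes "f \<in> borel_measurable M" "g \<in> borel_measurable M"
  shows "(\<lambda>x. rayleigh_grad (f x) (g x)) \<in> borel_measurable M"
proof -
  have "(\<lambda>p. rayleigh_grad (fst p) (snd p)) \<in> borel_measurable (borel \<Otimes>\<^sub>M borel :: ((real^'n^'n) \<times> (real^'n)) measure)"
    unfolding borel_prod rayleigh_grad_def matrix_vector_mult_def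
    by (intro borel_measurable_continuous_onI continuous_intros)
  from measurable_compose[OF measurable_Pair[OF assms] this] show ?thesis
    by simp
qed

lemma norm_le_sum_abs_entries: "norm (A :: real^'n^'m) \<le> (\<Sum>i\<in>UNIV. \<Sum>j\<in>UNIV. \<bar>A $ i $ j\<bar>)"
proof -
  have "norm A \<le> (\<Sum>i\<in>UNIV. norm (A $ i))"
    unfolding norm_vec_def by (rule L2_set_le_sum) simp
  also have "\<dots> \<le> (\<Sum>i\<in>UNIV. \<Sum>j\<in>UNIV. \<bar>A $ i $ j\<bar>)"
    by (intro sum_mono norm_le_l1_cart)
  finally show ?thesis .
qed

locale oja_sampling = prob_space M for M :: "'a measure" +
  fixes P :: "'w measure" and W :: "nat \<Rightarrow> 'a \<Rightarrow> 'w" and H :: "'w \<Rightarrow> real^'d^'d"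
    and Hbar :: "real^'d^'d" and \<alpha> :: "nat \<Rightarrow> real" and G :: real and v0 :: "real^'d"
  assumes prob_space_P: "prob_space P"
    and measurable_W: "\<And>n. W n \<in> measurable M P"
    and indep_W: "indep_vars (\<lambda>_. P) W UNIV"
    and distr_W: "\<And>n. distr M P (W n) = P"
    and measurable_H: "H \<in> borel_measurable P"
    and integral_H: "integral\<^sup>L P H = Hbar"
    and bounded_H: "\<And>w. w \<in> space P \<Longrightarrow> opnorm2 (H w) \<le> G"
    and step_nonneg: "\<And>n. 0 \<le> \<alpha> n"
    and summable_step_sq: "summable (\<lambda>n. (\<alpha> n)\<^sup>2)"
    and norm_v0: "norm v0 = 1"
begin

definition iterate :: "nat \<Rightarrow> (nat \<Rightarrow> 'w) \<Rightarrow> real^'d" where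
  "iterate n \<omega> = oja_iter \<alpha> (\<lambda>k. H (\<omega> k)) v0 n"

lemma norm_iterate: "norm (iterate n \<omega>) = 1"
  unfolding iterate_def using norm_v0 step_nonneg by (rule norm_oja_iter)

lemma iterate_restrict: "{..<n} \<subseteq> I \<Longrightarrow> iterate n (restrict \<omega> I) = iterate n \<omega>"
  unfolding iterate_def by (rule oja_iter_cong) auto

lemma borel_measurable_iterate: "iterate n \<in> borel_measurable (PiM {..<n} (\<lambda>_. P))"
proof (induction n)
  case 0
  then show ?case by (simp add: iterate_def)
next
  case (Suc n)
  have "(\<lambda>f. iterate n (restrict f {..<n})) \<in> borel_measurable (PiM {..<Suc n} (\<lambda>_. P))"
    by (rule measurable_compose[OF measurable_restrict_subset Suc.IH]) auto
  moreover have "(\<lambda>f. iterate n (restrict f {..<n})) = iterate n"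
    by (intro ext iterate_restrict) simp
  ultimately have [measurable]: "iterate n \<in> borel_measurable (PiM {..<Suc n} (\<lambda>_. P))"
    by simp
  have [measurable]: "(\<lambda>f. H (f n)) \<in> borel_measurable (PiM {..<Suc n} (\<lambda>_. P))"
    by (rule measurable_compose[OF measurable_component_singleton[of n] measurable_H]) auto
  have "(\<lambda>f. sgn (iterate n f - \<alpha> n *\<^sub>R rayleigh_grad (H (f n)) (iterate n f)))
      \<in> borel_measurable (PiM {..<Suc n} (\<lambda>_. P))"
    unfolding sgn_div_norm by measurable
  moreover have "iterate (Suc n) = (\<lambda>f. sgn (iterate n f - \<alpha> n *\<^sub>R rayleigh_grad (H (f n)) (iterate n f)))"
    unfolding iterate_def by (intro ext oja_iter_Suc_sgn)
  ultimately show ?case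
    by simp
qed

lemma norm_H_mult_le: "w \<in> space P \<Longrightarrow> norm (H w *v u) \<le> G * norm u"
  by (rule order_trans[OF norm_matrix_vector_le mult_right_mono]) (auto simp: bounded_H[unfolded opnorm2_def])

lemma abs_H_entry_le: "w \<in> space P \<Longrightarrow> \<bar>H w $ i $ j\<bar> \<le> G"
  using matrix_component_le_onorm[of "H w" i j] bounded_H[of w] by (simp add: opnorm2_def)

lemma integrable_H: "integrable P H"
proof (rule finite_measure.integrable_const_bound)
  show "finite_measure P"
    using prob_space_P by (simp add: prob_space_def)
  show "AE w in P. norm (H w) \<le> (\<Sum>i\<in>(UNIV::'d set). \<Sum>j\<in>(UNIV::'d set). G)"
    using abs_H_entry_le by (intro AE_I2 order_trans[OF norm_le_sum_abs_entries] sum_mono) auto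
qed (rule measurable_H)

lemma integral_H_entry: "integral\<^sup>L P (\<lambda>w. H w $ i $ j) = Hbar $ i $ j"
  using integral_bounded_linear[OF bounded_linear_compose[OF bounded_linear_vec_nth bounded_linear_vec_nth] integrable_H]
  by (simp add: integral_H)

lemma bounded_centered_iid_entry_noise:
  "bounded_centered_iid M P W (\<lambda>w. (H w - Hbar) $ i $ j) (G + \<bar>Hbar $ i $ j\<bar>)"
proof
  have "continuous_on UNIV (\<lambda>X::real^'d^'d. (X - Hbar) $ i $ j)"
    by (intro continuous_intros)
  from measurable_compose[OF measurable_H borel_measurable_continuous_onI[OF this]]
  show "(\<lambda>w. (H w - Hbar) $ i $ j) \<in> borel_measurable P"
    by simp
  show "\<bar>(H w - Hbar) $ i $ j\<bar> \<le> G + \<bar>Hbar $ i $ j\<bar>" if "w \<in> space P" for w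
    using abs_H_entry_le[OF that, of i j] by (simp add: order_trans[OF abs_triangle_ineq4])
  have "integrable P (\<lambda>w. H w $ i $ j)"
    using integrable_H by (intro integrable_bounded_linear[OF bounded_linear_compose[OF bounded_linear_vec_nth bounded_linear_vec_nth]])
  moreover have "integrable P (\<lambda>w. Hbar $ i $ j)"
    using prob_space_P by (simp add: prob_space_def finite_measure.integrable_const)
  ultimately show "integral\<^sup>L P (\<lambda>w. (H w - Hbar) $ i $ j) = 0"
    using prob_space_P by (simp add: Bochner_Integration.integral_diff integral_H_entry prob_space.prob_space)
qed (use measurable_W indep_W distr_W in auto)

lemma AE_summable_weighted_entry_noise:
  assumes "continuous_on UNIV \<phi>"
  shows "AE x in M. summable (\<lambda>n. \<alpha> n * \<phi> (iterate n (\<lambda>k. W k x)) * (H (W n x) - Hbar) $ i $ j)"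
proof -
  define e where "e w = (H w - Hbar) $ i $ j" for w
  interpret noise: bounded_centered_iid M P W e "G + \<bar>Hbar $ i $ j\<bar>"
    unfolding e_def by (rule bounded_centered_iid_entry_noise)
  have "bounded (\<phi> ` sphere 0 1)"
    by (intro compact_imp_bounded compact_continuous_image continuous_on_subset[OF assms] compact_sphere) auto
  then obtain C where C: "\<forall>y\<in>\<phi> ` sphere 0 1. norm y \<le> C"
    unfolding bounded_iff by blast
  define d where "d k x = \<alpha> k * \<phi> (iterate k (\<lambda>m. W m x))" for k x
  have "noise.past_measurable k (d k)" for k
  proof (rule noise.past_measurableI)
    show "(\<lambda>f. \<alpha> k * \<phi> (iterate k f)) \<in> borel_measurable (PiM {..<k} (\<lambda>_. P))"
      using borel_measurable_iterate borel_measurable_continuous_onI[OF assms] by measurable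
  qed (simp add: d_def iterate_restrict)
  moreover have "\<bar>d k x\<bar> \<le> \<alpha> k * C" for k x
    using C norm_iterate[of k "\<lambda>m. W m x"] step_nonneg[of k]
    by (auto simp: d_def abs_mult norm_iterate intro: mult_left_mono)
  moreover have "summable (\<lambda>k. (\<alpha> k * C)\<^sup>2)"
    using summable_mult2[OF summable_step_sq, of "C\<^sup>2"] by (simp add: power_mult_distrib)
  ultimately have "AE x in M. convergent (\<lambda>N. noise.noise_sum d N x)"
    by (rule noise.AE_convergent_noise_sum)
  then show ?thesis
    by (simp add: noise.noise_sum_def summable_iff_convergent d_def e_def)
qed

lemma AE_summable_weighted_inner_noise:
  assumes "continuous_on UNIV Y"
  shows "AE x in M. summable (\<lambda>n. \<alpha> n *
    inner (rayleigh_grad (H (W n x) - Hbar) (iterate n (\<lambda>k. W k x))) (Y (iterate n (\<lambda>k. W k x))))"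
proof -
  define \<phi> where "\<phi> i j u = Y u $ i * u $ j - inner u (Y u) * u $ i * u $ j" for i j and u :: "real^'d"
  have "continuous_on UNIV (\<phi> i j)" for i j
    unfolding \<phi>_def using assms by (intro continuous_intros)
  then have "AE x in M. \<forall>i\<in>UNIV. \<forall>j\<in>UNIV.
      summable (\<lambda>n. \<alpha> n * \<phi> i j (iterate n (\<lambda>k. W k x)) * (H (W n x) - Hbar) $ i $ j)"
    by (intro AE_finite_allI AE_summable_weighted_entry_noise) auto
  then show ?thesis
  proof (rule AE_mp, intro AE_I2 impI)
    fix x
    assume "\<forall>i\<in>UNIV. \<forall>j\<in>UNIV. summable (\<lambda>n. \<alpha> n * \<phi> i j (iterate n (\<lambda>k. W k x)) * (H (W n x) - Hbar) $ i $ j)"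
    then have "summable (\<lambda>n. \<Sum>i\<in>UNIV. \<Sum>j\<in>UNIV. \<alpha> n * \<phi> i j (iterate n (\<lambda>k. W k x)) * (H (W n x) - Hbar) $ i $ j)"
      by (intro summable_sum) auto
    then show "summable (\<lambda>n. \<alpha> n *
        inner (rayleigh_grad (H (W n x) - Hbar) (iterate n (\<lambda>k. W k x))) (Y (iterate n (\<lambda>k. W k x))))"
      by (simp add: inner_rayleigh_grad_eq_sum sum_distrib_left \<phi>_def mult_ac)
  qed
qed

theorem AE_rayleigh_grad_tendsto_zero:
  assumes "transpose Hbar = Hbar" "\<And>n. 0 < \<alpha> n" "\<not> summable \<alpha>"
  shows "AE x in M. (\<lambda>n. rayleigh_grad Hbar (iterate n (\<lambda>k. W k x))) \<longlonglongrightarrow> 0"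
proof -
  note AE_space
  moreover have "AE x in M. \<forall>b\<in>Basis. summable (\<lambda>n. \<alpha> n *
      inner (rayleigh_grad (H (W n x) - Hbar) (iterate n (\<lambda>k. W k x))) b)"
    by (intro AE_finite_allI AE_summable_weighted_inner_noise[OF continuous_on_const]) auto
  moreover have "AE x in M. summable (\<lambda>n. \<alpha> n *
      inner (rayleigh_grad (H (W n x) - Hbar) (iterate n (\<lambda>k. W k x))) (rayleigh_grad Hbar (iterate n (\<lambda>k. W k x))))"
    by (intro AE_summable_weighted_inner_noise continuous_on_rayleigh_grad)
  ultimately show ?thesis
  proof (eventually_elim)
    case (elim x)
    interpret path: oja_path Hbar "\<lambda>k. H (W k x)" \<alpha> v0 G
    proof
      show "norm (H (W n x) *v u) \<le> G" if "norm u = 1" for n u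
        using norm_H_mult_le[OF measurable_space[OF measurable_W elim(1)], of n u] that by simp
    qed (use assms norm_v0 summable_step_sq in auto)
    have noise: "path.noise n = rayleigh_grad (H (W n x) - Hbar) (iterate n (\<lambda>k. W k x))" for n
      by (simp add: path.noise_def rayleigh_grad_diff iterate_def)
    show ?case
      unfolding iterate_def
    proof (rule path.rayleigh_grad_tendsto_zero)
      show "summable (\<lambda>n. \<alpha> n *\<^sub>R path.noise n)"
        by (rule summable_if_summable_inner_Basis) (use elim(2) in \<open>simp add: noise\<close>)
      show "summable (\<lambda>n. \<alpha> n * inner (rayleigh_grad Hbar (path.v n)) (path.noise n))"
        using elim(3) by (simp add: noise inner_commute iterate_def)
    qed (rule assms(3))
  qed
qed

end

theorem proposition4p10:
  fixes M :: "'a measure" and P :: "'w measure"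
    and W :: "nat \<Rightarrow> 'a \<Rightarrow> 'w"
    and H :: "'w \<Rightarrow> real^'d^'d" and Hbar :: "real^'d^'d"
    and \<alpha> :: "nat \<Rightarrow> real" and \<sigma> G1 :: real and v0 :: "real^'d"
  assumes "prob_space M" and "prob_space P"
    and "\<And>n. W n \<in> measurable M P"
    and "prob_space.indep_vars M (\<lambda>_. P) W UNIV"
    and "\<And>n. distr M P (W n) = P"
    and "transpose Hbar = Hbar"
    and "H \<in> borel_measurable P"
    and "\<forall>w\<in>space P. transpose (H w) = H w"
    and "integral\<^sup>L P H = Hbar"
    and "integral\<^sup>L P (\<lambda>w. (opnorm2 (H w))^2) \<le> \<sigma>^2"
    and "\<forall>w\<in>space P. opnorm2 (H w) \<le> G1"
    and "\<And>n. \<alpha> n > 0"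
    and "\<not> summable \<alpha>"
    and "summable (\<lambda>n. (\<alpha> n)^2)"
    and "norm v0 = 1"
  shows "AE x in M. \<forall>u r. strict_mono r \<and>
           (\<lambda>n. oja_iter \<alpha> (\<lambda>k. H (W k x)) v0 (r n)) \<longlonglongrightarrow> u
           \<longrightarrow> (\<exists>c. Hbar *v u = c *s u)"
proof -
  have "oja_sampling M P W H Hbar \<alpha> G1 v0"
    using assms(1-5,7,9,11,14,15) less_imp_le[OF assms(12)]
    by (intro oja_sampling.intro oja_sampling_axioms.intro) simp_all
  then interpret oja_sampling M P W H Hbar \<alpha> G1 v0 .
  have "AE x in M. (\<lambda>n. rayleigh_grad Hbar (iterate n (\<lambda>k. W k x))) \<longlonglongrightarrow> 0"
    using assms(6,12,13) by (rule AE_rayleigh_grad_tendsto_zero)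
  then show ?thesis
  proof eventually_elim
    case (elim x)
    then show ?case
      unfolding iterate_def using eigenvector_if_rayleigh_grad_tendsto_zero by blast
  qed
qed

end
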